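(* Let $P$ be the path $u,w,v$ of length 2, let $m\ge 3$, and let $L$ be an $m$-assignment for $P$. For $c\in L(u)$ and $d\in L(v)$ let $N(c,d)$ be the number of proper $L$-colorings of $P$ in which $u$ is colored $c$ and $v$ is colored $d$. Let $a=|L(u)\cap L(v)|$. Then: (i) for each $c\in L(u)$ and $d\in L(v)$, $m-2\le N(c,d)\le m$; (ii) the number of ordered pairs $(c,d)\in L(u)\times L(v)$ with $N(c,d)=m-2$ is at most $\frac{(a+m)^2}{4}-a$.
   Context: An $m$-assignment $L$ assigns to each vertex $x$ a set $L(x)$ of $m$ colors; a proper $L$-coloring is a proper coloring $f$ with $f(x)\in L(x)$ for every vertex $x$. *)

theory Defs
  imports Complex_Main "HOL-Library.FuncSet"
begin

definition m_assignment :: "'v set \<Rightarrow> ('v \<Rightarrow> 'c set) \<Rightarrow> nat \<Rightarrow> bool" where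
  "m_assignment V L m \<longleftrightarrow> (\<forall>x\<in>V. finite (L x) \<and> card (L x) = m)"

definition proper_L_coloring ::
  "'v set \<Rightarrow> ('v \<Rightarrow> 'v \<Rightarrow> bool) \<Rightarrow> ('v \<Rightarrow> 'c set) \<Rightarrow> ('v \<Rightarrow> 'c) \<Rightarrow> bool" where
  "proper_L_coloring V E L f \<longleftrightarrow>
     (\<forall>x\<in>V. f x \<in> L x) \<and> (\<forall>x\<in>V. \<forall>y\<in>V. E x y \<longrightarrow> f x \<noteq> f y)"

definition path3_edge :: "'v \<Rightarrow> 'v \<Rightarrow> 'v \<Rightarrow> 'v \<Rightarrow> 'v \<Rightarrow> bool" where
  "path3_edge u w v x y \<longleftrightarrow> {x, y} = {u, w} \<or> {x, y} = {w, v}"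

definition Ncount :: "'v \<Rightarrow> 'v \<Rightarrow> 'v \<Rightarrow> ('v \<Rightarrow> 'c set) \<Rightarrow> 'c \<Rightarrow> 'c \<Rightarrow> nat" where
  "Ncount u w v L c d = card {f \<in> extensional {u, w, v}.
      proper_L_coloring {u, w, v} (path3_edge u w v) L f \<and> f u = c \<and> f v = d}"

end

theory Submission
  imports Defs
begin

text \<open>A colouring counted by \<open>N(c, d)\<close> is determined by its value at the middle vertex \<open>w\<close>,
  which may be any colour of \<open>L w\<close> other than \<open>c\<close> and \<open>d\<close>; hence \<open>N(c, d) = |L w - {c, d}|\<close>,
  which is \<open>m - 2\<close> exactly when \<open>c \<noteq> d\<close> both lie in \<open>L w\<close>. With \<open>X = L u \<inter> L w\<close> and
  \<open>Y = L v \<inter> L w\<close>, the pairs with \<open>N(c, d) = m - 2\<close> are the off-diagonal pairs of \<open>X \<times> Y\<close>,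
  of which there are \<open>|X| |Y| - |X \<inter> Y|\<close>. Since \<open>X \<union> Y \<subseteq> L w\<close> we have
  \<open>|X| + |Y| \<le> m + |X \<inter> Y|\<close>, and AM-GM together with \<open>|X \<inter> Y| \<le> a\<close> gives the bound.\<close>

lemma path3_edge_iff:
  "path3_edge u w v x y \<longleftrightarrow>
     (x = u \<and> y = w) \<or> (x = w \<and> y = u) \<or> (x = w \<and> y = v) \<or> (x = v \<and> y = w)"
  unfolding path3_edge_def doubleton_eq_iff by blast

lemma proper_L_coloring_path3_iff:
  "proper_L_coloring {u, w, v} (path3_edge u w v) L f \<longleftrightarrow>
     f u \<in> L u \<and> f w \<in> L w \<and> f v \<in> L v \<and> f u \<noteq> f w \<and> f w \<noteq> f v"
  unfolding proper_L_coloring_def path3_edge_iff ball_simps insert_iff empty_iff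
  by (cases "u = w"; cases "w = v"; cases "u = v") auto

lemma Ncount_eq_card_Diff:
  assumes "distinct [u, w, v]" and "c \<in> L u" and "d \<in> L v"
  shows "Ncount u w v L c d = card (L w - {c, d})"
proof -
  define colour_w where "colour_w x = (\<lambda>y\<in>{u, w, v}. if y = u then c else if y = w then x else d)"
    for x
  have colourings: "{f \<in> extensional {u, w, v}.
      proper_L_coloring {u, w, v} (path3_edge u w v) L f \<and> f u = c \<and> f v = d}
      = colour_w ` (L w - {c, d})"
  proof (intro equalityI subsetI)
    fix f
    assume "f \<in> {f \<in> extensional {u, w, v}.
      proper_L_coloring {u, w, v} (path3_edge u w v) L f \<and> f u = c \<and> f v = d}"
    then have "f \<in> extensional {u, w, v}" "f w \<in> L w - {c, d}" "f u = c" "f v = d"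
      by (auto simp: proper_L_coloring_path3_iff)
    moreover from this have "f = colour_w (f w)"
      by (intro extensionalityI) (auto simp: colour_w_def)
    ultimately show "f \<in> colour_w ` (L w - {c, d})" by blast
  next
    fix f
    assume "f \<in> colour_w ` (L w - {c, d})"
    then obtain x where "x \<in> L w - {c, d}" and "f = colour_w x" by blast
    moreover have "colour_w x \<in> extensional {u, w, v}"
      by (simp add: colour_w_def)
    moreover have "colour_w x u = c" "colour_w x w = x" "colour_w x v = d"
      using assms(1) by (auto simp: colour_w_def)
    ultimately show "f \<in> {f \<in> extensional {u, w, v}.
      proper_L_coloring {u, w, v} (path3_edge u w v) L f \<and> f u = c \<and> f v = d}"
      using assms(2,3) by (auto simp: proper_L_coloring_path3_iff)
  qed
  have "colour_w x w = x" for x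
    using assms(1) by (auto simp: colour_w_def)
  then have "inj_on colour_w (L w - {c, d})"
    by (metis inj_onI)
  then show ?thesis
    unfolding Ncount_def colourings by (rule card_image)
qed

lemma card_Diff_doubleton_bounds:
  assumes "finite A"
  shows "card A - 2 \<le> card (A - {c, d})" and "card (A - {c, d}) \<le> card A"
proof -
  have "card {c, d} \<le> 2" by (simp add: card_insert_if)
  then show "card A - 2 \<le> card (A - {c, d})"
    using diff_card_le_card_Diff[of "{c, d}" A] by simp
  show "card (A - {c, d}) \<le> card A"
    using assms by (simp add: card_mono)
qed

lemma card_Diff_doubleton_eq_iff:
  assumes "finite A" and "2 \<le> card A"
  shows "card (A - {c, d}) = card A - 2 \<longleftrightarrow> c \<noteq> d \<and> c \<in> A \<and> d \<in> A"
  using assms by (cases "c \<in> A"; cases "d \<in> A"; cases "c = d") (auto simp: card_Diff_insert)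

lemma card_product_off_diagonal:
  assumes "finite X" and "finite Y"
  shows "card {(x, y) \<in> X \<times> Y. x \<noteq> y} + card (X \<inter> Y) = card X * card Y"
proof -
  let ?P = "{(x, y) \<in> X \<times> Y. x \<noteq> y}" and ?D = "(\<lambda>z. (z, z)) ` (X \<inter> Y)"
  have "X \<times> Y = ?P \<union> ?D" by auto
  then have "card X * card Y = card (?P \<union> ?D)"
    by (metis card_cartesian_product)
  also have "\<dots> = card ?P + card ?D"
    using assms by (intro card_Un_disjoint) (auto intro: finite_subset[of _ "X \<times> Y"])
  also have "card ?D = card (X \<inter> Y)"
    by (simp add: card_image inj_on_def)
  finally show ?thesis by simp
qed

lemma mult_diff_le_shifted_square:
  fixes x y z a m :: real
  assumes "x + y \<le> m + z" "z \<le> a" "0 \<le> x" "0 \<le> y" "0 \<le> z" "2 \<le> m"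
  shows "x * y - z \<le> (a + m)^2 / 4 - a"
proof -
  have "x * y \<le> (x + y)^2 / 4"
    using sum_squares_ge_zero[of "x - y" 0] by (simp add: power2_eq_square algebra_simps)
  also have "\<dots> \<le> (m + z)^2 / 4"
    using assms by (intro divide_right_mono power_mono) auto
  also have "(m + z)^2 / 4 - z \<le> (a + m)^2 / 4 - a"
  proof -
    have "(a + m)^2 - (m + z)^2 = (a - z) * (a + z + 2 * m)"
      by (simp add: power2_eq_square algebra_simps)
    also have "\<dots> \<ge> (a - z) * 4"
      using assms by (intro mult_left_mono) auto
    finally show ?thesis by simp
  qed
  finally show ?thesis by linarith
qed

lemma card_off_diagonal_pairs_le:
  assumes "finite W" and "2 \<le> card W" and "X \<subseteq> W" and "Y \<subseteq> W" and "card (X \<inter> Y) \<le> a"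
  shows "real (card {(x, y) \<in> X \<times> Y. x \<noteq> y}) \<le> (real a + real (card W))^2 / 4 - real a"
proof -
  have fin: "finite X" "finite Y"
    using assms(1,3,4) finite_subset by auto
  have "card X + card Y = card (X \<union> Y) + card (X \<inter> Y)"
    using fin by (rule card_Un_Int)
  moreover have "card (X \<union> Y) \<le> card W"
    using assms(1,3,4) by (intro card_mono) auto
  ultimately have "real (card X) * real (card Y) - real (card (X \<inter> Y))
      \<le> (real a + real (card W))^2 / 4 - real a"
    using assms(2,5) by (intro mult_diff_le_shifted_square) auto
  moreover have "card {(x, y) \<in> X \<times> Y. x \<noteq> y} + card (X \<inter> Y) = card X * card Y"
    using fin by (rule card_product_off_diagonal)
  then have "real (card {(x, y) \<in> X \<times> Y. x \<noteq> y}) + real (card (X \<inter> Y))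
      = real (card X) * real (card Y)"
    unfolding of_nat_add[symmetric] of_nat_mult[symmetric] by (rule arg_cong)
  ultimately show ?thesis by linarith
qed

theorem lemma19:
  fixes u w v :: 'v and L :: "'v \<Rightarrow> 'c set" and m :: nat
  assumes "distinct [u, w, v]"
    and "m \<ge> 3"
    and "m_assignment {u, w, v} L m"
  defines "a \<equiv> card (L u \<inter> L v)"
  shows "(\<forall>c\<in>L u. \<forall>d\<in>L v. m - 2 \<le> Ncount u w v L c d \<and> Ncount u w v L c d \<le> m)
    \<and> real (card {(c, d) \<in> L u \<times> L v. Ncount u w v L c d = m - 2})
        \<le> (real a + real m)^2 / 4 - real a"
proof -
  have fin: "finite (L u)" "finite (L v)" "finite (L w)" and card_Lw: "card (L w) = m"
    using assms(3) unfolding m_assignment_def by auto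
  have N: "Ncount u w v L c d = card (L w - {c, d})" if "c \<in> L u" "d \<in> L v" for c d
    using Ncount_eq_card_Diff[OF assms(1) that] .
  have bounds: "\<forall>c\<in>L u. \<forall>d\<in>L v. m - 2 \<le> Ncount u w v L c d \<and> Ncount u w v L c d \<le> m"
    using card_Diff_doubleton_bounds[OF fin(3)] by (simp add: N card_Lw)
  have "Ncount u w v L c d = m - 2 \<longleftrightarrow> c \<noteq> d \<and> c \<in> L w \<and> d \<in> L w"
    if "c \<in> L u" "d \<in> L v" for c d
    using card_Diff_doubleton_eq_iff[OF fin(3), of c d] assms(2) N[OF that] card_Lw by simp
  then have bad_pairs: "{(c, d) \<in> L u \<times> L v. Ncount u w v L c d = m - 2}
      = {(c, d) \<in> (L u \<inter> L w) \<times> (L v \<inter> L w). c \<noteq> d}"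
    by blast
  have "card ((L u \<inter> L w) \<inter> (L v \<inter> L w)) \<le> a"
    unfolding a_def using fin by (intro card_mono) auto
  then have "real (card {(c, d) \<in> (L u \<inter> L w) \<times> (L v \<inter> L w). c \<noteq> d})
      \<le> (real a + real m)^2 / 4 - real a"
    using assms(2) by (intro card_off_diagonal_pairs_le[OF fin(3), unfolded card_Lw]) auto
  with bounds show ?thesis
    unfolding bad_pairs by blast
qed

end
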